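(* For $\mathbf{u}\in\mathbb{R}^6$ define $\mathbf{w}^{\pm}(\mathbf{u})=\frac12\left(\mathbf{u}\pm\frac{\mathbf{f}(\mathbf{u})}{\alpha(\mathbf{u})}\right)$ with $\alpha(\mathbf{u})=|v_1|+\sqrt{3p_{11}/\rho}$. If $\mathbf{u}\in\mathbb{U}_{\mathrm{ad}}$, then $\mathbf{w}^+(\mathbf{u})\in\mathbb{U}_{\mathrm{ad}}$ and $\mathbf{w}^-(\mathbf{u})\in\mathbb{U}_{\mathrm{ad}}$.
   Context: Ten-Moment equations: conservative variable $\mathbf{u}=(\rho,\rho v_1,\rho v_2,E_{11},E_{12},E_{22})^\top$; pressure tensor components $p_{11}=2E_{11}-\rho v_1^2$, $p_{12}=2E_{12}-\rho v_1v_2$, $p_{22}=2E_{22}-\rho v_2^2$. $\mathbb{U}_{\mathrm{ad}}=\{\mathbf{u}\in\mathbb{R}^6:\rho>0\text{ and }\mathbf{x}^\top\mathbf{p}\mathbf{x}>0\ \forall\mathbf{x}\in\mathbb{R}^2\setminus\{0\}\}$. The $x$-direction flux is $\mathbf{f}(\mathbf{u})=\big(\rho v_1,\ \rho v_1^2+p_{11},\ \rho v_1v_2+p_{12},\ (E_{11}+p_{11})v_1,\ E_{12}v_1+\tfrac12(p_{11}v_2+p_{12}v_1),\ E_{22}v_1+p_{12}v_2\big)^\top$. *)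

theory Defs
  imports Complex_Main
begin

text \<open>Conservative state u = (rho, rho v1, rho v2, E11, E12, E22) in R^6, as a 6-tuple.\<close>
type_synonym state = "real \<times> real \<times> real \<times> real \<times> real \<times> real"

definition rho :: "state \<Rightarrow> real" where
  "rho u = (case u of (r, m1, m2, e11, e12, e22) \<Rightarrow> r)"

definition vel1 :: "state \<Rightarrow> real" where
  "vel1 u = (case u of (r, m1, m2, e11, e12, e22) \<Rightarrow> m1 / r)"

definition vel2 :: "state \<Rightarrow> real" where
  "vel2 u = (case u of (r, m1, m2, e11, e12, e22) \<Rightarrow> m2 / r)"

definition p11 :: "state \<Rightarrow> real" where
  "p11 u = (case u of (r, m1, m2, e11, e12, e22) \<Rightarrow> 2 * e11 - r * (vel1 u)^2)"

definition p12 :: "state \<Rightarrow> real" where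
  "p12 u = (case u of (r, m1, m2, e11, e12, e22) \<Rightarrow> 2 * e12 - r * vel1 u * vel2 u)"

definition p22 :: "state \<Rightarrow> real" where
  "p22 u = (case u of (r, m1, m2, e11, e12, e22) \<Rightarrow> 2 * e22 - r * (vel2 u)^2)"

definition Uad :: "state set" where
  "Uad = {u. rho u > 0 \<and>
     (\<forall>x1 x2 :: real. (x1, x2) \<noteq> (0, 0) \<longrightarrow>
        x1 * (p11 u * x1 + p12 u * x2) + x2 * (p12 u * x1 + p22 u * x2) > 0)}"

definition flux :: "state \<Rightarrow> state" where
  "flux u = (case u of (r, m1, m2, e11, e12, e22) \<Rightarrow>
     (let v1 = vel1 u; v2 = vel2 u; q11 = p11 u; q12 = p12 u; q22 = p22 u in
      (r * v1,
       r * v1^2 + q11,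
       r * v1 * v2 + q12,
       (e11 + q11) * v1,
       e12 * v1 + (q11 * v2 + q12 * v1) / 2,
       e22 * v1 + q12 * v2)))"

definition alpha :: "state \<Rightarrow> real" where
  "alpha u = \<bar>vel1 u\<bar> + sqrt (3 * p11 u / rho u)"

definition scale6 :: "real \<Rightarrow> state \<Rightarrow> state" where
  "scale6 c u = (case u of (a1, a2, a3, a4, a5, a6) \<Rightarrow> (c*a1, c*a2, c*a3, c*a4, c*a5, c*a6))"

definition add6 :: "state \<Rightarrow> state \<Rightarrow> state" where
  "add6 u w = (case u of (a1, a2, a3, a4, a5, a6) \<Rightarrow> case w of (b1, b2, b3, b4, b5, b6) \<Rightarrow>
     (a1+b1, a2+b2, a3+b3, a4+b4, a5+b5, a6+b6))"

definition wplus :: "state \<Rightarrow> state" where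
  "wplus u = scale6 (1/2) (add6 u (scale6 (1 / alpha u) (flux u)))"

definition wminus :: "state \<Rightarrow> state" where
  "wminus u = scale6 (1/2) (add6 u (scale6 (- 1 / alpha u) (flux u)))"

end

theory Submission
  imports Defs
begin

text \<open>In primitive variables \<open>(\<rho>, v\<^sub>1, v\<^sub>2, p\<^sub>1\<^sub>1, p\<^sub>1\<^sub>2, p\<^sub>2\<^sub>2)\<close> the state
  \<open>(u + s f(u))/2\<close> has density \<open>\<rho>k/2\<close> with \<open>k = 1 + s v\<^sub>1\<close>, and its pressure tensor has
  \<open>p\<^sub>1\<^sub>1\<close>-entry \<open>p\<^sub>1\<^sub>1 D/(2\<rho>k)\<close> and determinant \<open>D \<rho> k\<^sup>2 det p/(2\<rho>k)\<^sup>2\<close>, where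
  \<open>D = k\<^sup>2\<rho> - s\<^sup>2p\<^sub>1\<^sub>1\<close>. So admissibility is preserved as soon as
  \<open>|s| sqrt(p\<^sub>1\<^sub>1/\<rho>) < 1 + s v\<^sub>1\<close>, and for \<open>s = \<plusminus>1/\<alpha>(u)\<close> this holds because
  \<open>\<alpha>(u) \<plusminus> v\<^sub>1 \<ge> sqrt(3p\<^sub>1\<^sub>1/\<rho>) > sqrt(p\<^sub>1\<^sub>1/\<rho>)\<close>.\<close>

lemma pos_def_sym2_iff:
  fixes a b c :: real
  shows "(\<forall>x1 x2 :: real. (x1, x2) \<noteq> (0, 0) \<longrightarrow> x1 * (a * x1 + b * x2) + x2 * (b * x1 + c * x2) > 0)
     \<longleftrightarrow> a > 0 \<and> a * c - b^2 > 0"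
proof
  assume H: "\<forall>x1 x2 :: real. (x1, x2) \<noteq> (0, 0) \<longrightarrow> x1 * (a * x1 + b * x2) + x2 * (b * x1 + c * x2) > 0"
  from H[rule_format, of 1 0] have a: "a > 0" by simp
  from H[rule_format, of "-b" a] a have "(-b) * (a * (-b) + b * a) + a * (b * (-b) + c * a) > 0" by simp
  hence "a * (a * c - b^2) > 0" by (simp add: algebra_simps power2_eq_square)
  with a show "a > 0 \<and> a * c - b^2 > 0" by (simp add: zero_less_mult_iff)
next
  assume H: "a > 0 \<and> a * c - b^2 > 0"
  show "\<forall>x1 x2 :: real. (x1, x2) \<noteq> (0, 0) \<longrightarrow> x1 * (a * x1 + b * x2) + x2 * (b * x1 + c * x2) > 0"
  proof (intro allI impI)
    fix x1 x2 :: real assume nz: "(x1, x2) \<noteq> (0, 0)"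
    have square: "a * (x1 * (a * x1 + b * x2) + x2 * (b * x1 + c * x2)) = (a*x1 + b*x2)^2 + (a*c - b^2) * x2^2"
      by (simp add: algebra_simps power2_eq_square)
    have "(a*x1 + b*x2)^2 + (a*c - b^2) * x2^2 > 0"
    proof (cases "x2 = 0")
      case True
      with nz H show ?thesis by simp
    next
      case False
      with H have "(a*c - b^2) * x2^2 > 0" by simp
      thus ?thesis by (simp add: add_nonneg_pos)
    qed
    with square H show "x1 * (a * x1 + b * x2) + x2 * (b * x1 + c * x2) > 0"
      by (metis zero_less_mult_pos)
  qed
qed

lemma Uad_iff: "u \<in> Uad \<longleftrightarrow> rho u > 0 \<and> p11 u > 0 \<and> p11 u * p22 u - (p12 u)^2 > 0"
  unfolding Uad_def using pos_def_sym2_iff by blast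

lemma state_eq_primitive:
  assumes "rho u \<noteq> 0"
  shows "u = (rho u, rho u * vel1 u, rho u * vel2 u, (p11 u + rho u * (vel1 u)^2) / 2,
              (p12 u + rho u * vel1 u * vel2 u) / 2, (p22 u + rho u * (vel2 u)^2) / 2)"
  using assms by (cases u) (simp add: rho_def vel1_def vel2_def p11_def p12_def p22_def)

lemma half_add_scaled_flux_primitive:
  fixes r v w a b c s :: real
  defines "u \<equiv> (r, r*v, r*w, (a + r*v^2)/2, (b + r*v*w)/2, (c + r*w^2)/2)"
    and "k \<equiv> 1 + s*v"
  defines "D \<equiv> k^2 * r - s^2 * a"
    and "u' \<equiv> scale6 (1/2) (add6 u (scale6 s (flux u)))"
  assumes "r \<noteq> 0" and "k \<noteq> 0"
  shows "rho u' = r*k/2"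
    and "p11 u' = a * D / (2*r*k)"
    and "p12 u' = b * D / (2*r*k)"
    and "p22 u' = (c * k^2 * r - s^2 * b^2) / (2*r*k)"
proof -
  have u': "u' = (r*k/2, (r*v*k + s*a)/2, (r*w*k + s*b)/2,
       ((a + r*v^2)*k + 2*s*a*v)/4, ((b + r*v*w)*k + s*(a*w + b*v))/4,
       ((c + r*w^2)*k + 2*s*b*w)/4)"
    using assms(5) unfolding u'_def u_def k_def scale6_def add6_def flux_def
      vel1_def vel2_def p11_def p12_def p22_def Let_def
    by (simp add: field_simps power2_eq_square)
  have v1: "vel1 u' = (r*v*k + s*a) / (r*k)" and v2: "vel2 u' = (r*w*k + s*b) / (r*k)"
    unfolding u' vel1_def vel2_def using assms(5,6) by (simp_all add: field_simps)
  show "rho u' = r*k/2" unfolding u' rho_def by simp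
  show "p11 u' = a * D / (2*r*k)"
    unfolding p11_def v1 unfolding u' D_def using assms(5,6) by (simp add: field_simps power2_eq_square)
  show "p12 u' = b * D / (2*r*k)"
    unfolding p12_def v1 v2 unfolding u' D_def using assms(5,6) by (simp add: field_simps power2_eq_square)
  show "p22 u' = (c * k^2 * r - s^2 * b^2) / (2*r*k)"
    unfolding p22_def v2 unfolding u' using assms(5,6) by (simp add: field_simps power2_eq_square)
qed

lemma half_add_scaled_flux_in_Uad:
  assumes u: "u \<in> Uad" and speed: "\<bar>s\<bar> * sqrt (p11 u / rho u) < 1 + s * vel1 u"
  shows "scale6 (1/2) (add6 u (scale6 s (flux u))) \<in> Uad"
proof -
  define r v w a b c where "r = rho u" and "v = vel1 u" and "w = vel2 u"
    and "a = p11 u" and "b = p12 u" and "c = p22 u"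
  define k D where "k = 1 + s*v" and "D = k^2 * r - s^2 * a"
  define u' where "u' = scale6 (1/2) (add6 u (scale6 s (flux u)))"
  have r: "r > 0" and a: "a > 0" and det: "a * c - b^2 > 0"
    using u unfolding Uad_iff r_def a_def b_def c_def by auto
  have speed': "\<bar>s\<bar> * sqrt (a / r) < k"
    using speed unfolding k_def v_def a_def r_def .
  have nonneg: "0 \<le> \<bar>s\<bar> * sqrt (a / r)" using r a by simp
  with speed' have k: "k > 0" by linarith
  from speed' nonneg have "(\<bar>s\<bar> * sqrt (a / r))^2 < k^2" by (rule power_strict_mono) simp
  hence "s^2 * a / r < k^2" using r a by (simp add: power_mult_distrib)
  hence D: "D > 0" unfolding D_def using r by (simp add: field_simps)
  have u_prim: "u = (r, r*v, r*w, (a + r*v^2)/2, (b + r*v*w)/2, (c + r*w^2)/2)"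
    unfolding r_def v_def w_def a_def b_def c_def using r r_def by (intro state_eq_primitive) simp
  note u'_prim = half_add_scaled_flux_primitive[where r=r and v=v and w=w and a=a and b=b and c=c
      and s=s, folded u_prim k_def, folded D_def u'_def, OF r[THEN less_imp_neq, symmetric]
      k[THEN less_imp_neq, symmetric]]
  have "p11 u' * p22 u' - (p12 u')^2 = D * (r * k^2) * (a*c - b^2) / (2*r*k)^2"
    unfolding u'_prim D_def using r k by (simp add: field_simps power2_eq_square)
  also have "\<dots> > 0" using D r k det by simp
  finally show ?thesis unfolding u'_def[symmetric] Uad_iff u'_prim using r k a D by simp
qed

lemma alpha_speed_condition:
  assumes u: "u \<in> Uad" and \<sigma>: "\<bar>\<sigma>\<bar> = 1"
  shows "\<bar>\<sigma> / alpha u\<bar> * sqrt (p11 u / rho u) < 1 + \<sigma> / alpha u * vel1 u"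
proof -
  have pos: "rho u > 0" "p11 u > 0" using u unfolding Uad_iff by auto
  have "sqrt (p11 u / rho u) < sqrt (3 * p11 u / rho u)" using pos by (simp add: divide_strict_right_mono)
  also have "\<dots> \<le> alpha u + \<sigma> * vel1 u"
    using \<sigma> unfolding alpha_def by (cases "\<sigma> \<ge> 0") auto
  finally have "sqrt (p11 u / rho u) < alpha u + \<sigma> * vel1 u" .
  moreover have "alpha u > 0" unfolding alpha_def using pos by (simp add: add_nonneg_pos)
  ultimately show ?thesis using \<sigma> by (simp add: divide_strict_right_mono field_simps)
qed

theorem theorem2:
  fixes u :: state
  assumes "u \<in> Uad"
  shows "wplus u \<in> Uad \<and> wminus u \<in> Uad"
  unfolding wplus_def wminus_def
  using half_add_scaled_flux_in_Uad[OF assms alpha_speed_condition[OF assms, of 1]]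
    half_add_scaled_flux_in_Uad[OF assms alpha_speed_condition[OF assms, of "-1"]] by simp

end
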